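(* Let $T=\mathrm{Id}$ and fix $\mu,\alpha>0$. Let $(w,u,q,p)\in H^1(\Omega,\mathbb{R}^d)\times H^1(\Omega)\times L^2(\Omega,\mathbb{R}^d)\times L^2(\Omega,\mathcal{S}^{d\times d})$ satisfy system (S0), and for each $\gamma>0$ let $(w_\gamma,u_\gamma,q_\gamma,p_\gamma)$ in the same spaces satisfy system (S$_\gamma$). Then, as $\gamma\to0$: $u_\gamma\to u$ strongly in $H^1(\Omega)$, $w_\gamma\to w$ strongly in $H^1(\Omega,\mathbb{R}^d)$, $\operatorname{div}q_\gamma\to\operatorname{div}q$ weakly* in $H^1(\Omega)^*$, and $q_\gamma+\operatorname{div}p_\gamma\to q+\operatorname{div}p$ weakly* in $H^1(\Omega,\mathbb{R}^d)^*$.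
   Context: Let $d\ge2$, $\Omega\subset\mathbb{R}^d$ bounded open with Lipschitz boundary; $\mathcal{S}^{d\times d}$ real symmetric matrices; $|\cdot|$ Euclidean norm on $\mathbb{R}^d$, Frobenius norm on matrices. $\alpha_0,\alpha_1\in C(\overline\Omega)$, $\alpha_0,\alpha_1>\underline\alpha>0$. $f\in L^2(\Omega)$. $\nabla:H^1(\Omega)\to L^2(\Omega,\mathbb{R}^d)$, $Ew=\frac12(\nabla w+\nabla w^\top)$, adjoints $\nabla^*,E^*$; $\operatorname{div}q:=-\nabla^*q\in H^1(\Omega)^*$ and $\operatorname{div}p:=-E^*p\in H^1(\Omega,\mathbb{R}^d)^*$. $-\mu\Delta u$ is $v\mapsto\mu\int\nabla u\cdot\nabla v$; $\alpha w-\alpha\Delta w$ is $\omega\mapsto\alpha\int(w\cdot\omega+\nabla w:\nabla\omega)$. System (S0): $u-\mu\Delta u+\nabla^*q-f=0$ in $H^1(\Omega)^*$; $\alpha w-\alpha\Delta w-q+E^*p=0$ in $H^1(\Omega,\mathbb{R}^d)^*$; $|q|\le\alpha_1$, $|p|\le\alpha_0$ a.e.; for a.e. $x$: $\alpha_1(\nabla u-w)-q|\nabla u-w|=0$ if $|q(x)|=\alpha_1(x)$ and $\nabla u-w=0$ if $|q(x)|<\alpha_1(x)$; $\alpha_0Ew-p|Ew|=0$ if $|p(x)|=\alpha_0(x)$ and $Ew=0$ if $|p(x)|<\alpha_0(x)$. System (S$_\gamma$): $u_\gamma-\mu\Delta u_\gamma+\nabla^*q_\gamma-f=0$; $\alpha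 w_\gamma-\alpha\Delta w_\gamma-q_\gamma+E^*p_\gamma=0$; $\max(|\nabla u_\gamma-w_\gamma|,\gamma)q_\gamma-\alpha_1(\nabla u_\gamma-w_\gamma)=0$ in $L^2$; $\max(|Ew_\gamma|,\gamma)p_\gamma-\alpha_0Ew_\gamma=0$ in $L^2$. *)

theory Defs
  imports "HOL-Analysis.Analysis"
begin

text \<open>Strong Lipschitz boundary: near every boundary point the domain lies (locally)
 strictly below the graph of a Lipschitz function over the hyperplane orthogonal to some
 unit direction e.\<close>
definition lipschitz_boundary :: "(real^'n) set \<Rightarrow> bool" where
  "lipschitz_boundary \<Omega> \<longleftrightarrow>
     (\<forall>x\<in>frontier \<Omega>. \<exists>r>0. \<exists>e::real^'n. \<exists>g C. norm e = 1 \<and>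
        C-lipschitz_on UNIV g \<and> (\<forall>y t. g (y + t *\<^sub>R e) = g y) \<and>
        \<Omega> \<inter> ball x r = {y \<in> ball x r. y \<bullet> e < g y})"

definition partial :: "'n::finite \<Rightarrow> (real^'n \<Rightarrow> real) \<Rightarrow> real^'n \<Rightarrow> real" where
  "partial i \<phi> x = frechet_derivative \<phi> (at x) (axis i 1)"

primrec iter_partial :: "'n::finite list \<Rightarrow> (real^'n \<Rightarrow> real) \<Rightarrow> real^'n \<Rightarrow> real" where
  "iter_partial [] \<phi> = \<phi>"
| "iter_partial (i # is) \<phi> = partial i (iter_partial is \<phi>)"

definition C_infinity :: "(real^'n::finite \<Rightarrow> real) \<Rightarrow> bool" where
  "C_infinity \<phi> \<longleftrightarrow> (\<forall>is. continuous_on UNIV (iter_partial is \<phi>) \<and>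
                              (\<forall>x. iter_partial is \<phi> differentiable (at x)))"

definition test_fun :: "(real^'n::finite) set \<Rightarrow> (real^'n \<Rightarrow> real) \<Rightarrow> bool" where
  "test_fun \<Omega> \<phi> \<longleftrightarrow> C_infinity \<phi> \<and> compact (closure {x. \<phi> x \<noteq> 0}) \<and>
                      closure {x. \<phi> x \<noteq> 0} \<subseteq> \<Omega>"

definition L2 :: "(real^'n::finite) set \<Rightarrow> (real^'n \<Rightarrow> 'b::euclidean_space) \<Rightarrow> bool" where
  "L2 \<Omega> g \<longleftrightarrow> g \<in> borel_measurable (lebesgue_on \<Omega>) \<and>
                 integrable (lebesgue_on \<Omega>) (\<lambda>x. norm (g x) ^ 2)"

definition weak_grad :: "(real^'n::finite) set \<Rightarrow> (real^'n \<Rightarrow> real) \<Rightarrow> (real^'n \<Rightarrow> real^'n) \<Rightarrow> bool" where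
  "weak_grad \<Omega> u G \<longleftrightarrow> (\<forall>\<phi>. test_fun \<Omega> \<phi> \<longrightarrow> (\<forall>i.
      (LINT x|lebesgue_on \<Omega>. u x * partial i \<phi> x) = - (LINT x|lebesgue_on \<Omega>. G x $ i * \<phi> x)))"

definition H1 :: "(real^'n::finite) set \<Rightarrow> (real^'n \<Rightarrow> real) \<Rightarrow> bool" where
  "H1 \<Omega> u \<longleftrightarrow> L2 \<Omega> u \<and> (\<exists>G. L2 \<Omega> G \<and> weak_grad \<Omega> u G)"

definition grad :: "(real^'n::finite) set \<Rightarrow> (real^'n \<Rightarrow> real) \<Rightarrow> real^'n \<Rightarrow> real^'n" where
  "grad \<Omega> u = (SOME G. L2 \<Omega> G \<and> weak_grad \<Omega> u G)"

definition H1v :: "(real^'n::finite) set \<Rightarrow> (real^'n \<Rightarrow> real^'n) \<Rightarrow> bool" where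
  "H1v \<Omega> w \<longleftrightarrow> L2 \<Omega> w \<and> (\<forall>i. H1 \<Omega> (\<lambda>x. w x $ i))"

text \<open>Jacobian: (Grad w x) \$ i \$ j = d_j w_i.\<close>
definition Grad :: "(real^'n::finite) set \<Rightarrow> (real^'n \<Rightarrow> real^'n) \<Rightarrow> real^'n \<Rightarrow> real^'n^'n" where
  "Grad \<Omega> w x = (\<chi> i. grad \<Omega> (\<lambda>y. w y $ i) x)"

definition symgrad :: "(real^'n::finite) set \<Rightarrow> (real^'n \<Rightarrow> real^'n) \<Rightarrow> real^'n \<Rightarrow> real^'n^'n" where
  "symgrad \<Omega> w x = (1/2) *\<^sub>R (Grad \<Omega> w x + transpose (Grad \<Omega> w x))"

text \<open>The two variational equations common to both systems (in H1* and (H1^d)*).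
 Norms on matrices (type real^n^n) are Frobenius norms, inner products Frobenius products.\<close>
definition equations ::
  "(real^'n::finite) set \<Rightarrow> real \<Rightarrow> real \<Rightarrow> (real^'n \<Rightarrow> real)
   \<Rightarrow> (real^'n \<Rightarrow> real^'n) \<Rightarrow> (real^'n \<Rightarrow> real) \<Rightarrow> (real^'n \<Rightarrow> real^'n) \<Rightarrow> (real^'n \<Rightarrow> real^'n^'n) \<Rightarrow> bool" where
  "equations \<Omega> \<mu> \<alpha> f w u q p \<longleftrightarrow>
     H1v \<Omega> w \<and> H1 \<Omega> u \<and> L2 \<Omega> q \<and> L2 \<Omega> p \<and>
     (AE x in lebesgue_on \<Omega>. transpose (p x) = p x) \<and>
     (\<forall>v. H1 \<Omega> v \<longrightarrow>
        (LINT x|lebesgue_on \<Omega>. u x * v x)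
        + \<mu> * (LINT x|lebesgue_on \<Omega>. grad \<Omega> u x \<bullet> grad \<Omega> v x)
        + (LINT x|lebesgue_on \<Omega>. q x \<bullet> grad \<Omega> v x)
        - (LINT x|lebesgue_on \<Omega>. f x * v x) = 0) \<and>
     (\<forall>\<omega>. H1v \<Omega> \<omega> \<longrightarrow>
        \<alpha> * (LINT x|lebesgue_on \<Omega>. w x \<bullet> \<omega> x + Grad \<Omega> w x \<bullet> Grad \<Omega> \<omega> x)
        - (LINT x|lebesgue_on \<Omega>. q x \<bullet> \<omega> x)
        + (LINT x|lebesgue_on \<Omega>. p x \<bullet> symgrad \<Omega> \<omega> x) = 0)"

definition system_S0 ::
  "(real^'n::finite) set \<Rightarrow> real \<Rightarrow> real \<Rightarrow> (real^'n \<Rightarrow> real) \<Rightarrow> (real^'n \<Rightarrow> real) \<Rightarrow> (real^'n \<Rightarrow> real)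
   \<Rightarrow> (real^'n \<Rightarrow> real^'n) \<Rightarrow> (real^'n \<Rightarrow> real) \<Rightarrow> (real^'n \<Rightarrow> real^'n) \<Rightarrow> (real^'n \<Rightarrow> real^'n^'n) \<Rightarrow> bool" where
  "system_S0 \<Omega> \<mu> \<alpha> \<alpha>0 \<alpha>1 f w u q p \<longleftrightarrow>
     equations \<Omega> \<mu> \<alpha> f w u q p \<and>
     (AE x in lebesgue_on \<Omega>.
        norm (q x) \<le> \<alpha>1 x \<and> norm (p x) \<le> \<alpha>0 x \<and>
        (norm (q x) = \<alpha>1 x \<longrightarrow>
           \<alpha>1 x *\<^sub>R (grad \<Omega> u x - w x) - norm (grad \<Omega> u x - w x) *\<^sub>R q x = 0) \<and>
        (norm (q x) < \<alpha>1 x \<longrightarrow> grad \<Omega> u x - w x = 0) \<and>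
        (norm (p x) = \<alpha>0 x \<longrightarrow>
           \<alpha>0 x *\<^sub>R symgrad \<Omega> w x - norm (symgrad \<Omega> w x) *\<^sub>R p x = 0) \<and>
        (norm (p x) < \<alpha>0 x \<longrightarrow> symgrad \<Omega> w x = 0))"

definition system_Sgamma ::
  "(real^'n::finite) set \<Rightarrow> real \<Rightarrow> real \<Rightarrow> (real^'n \<Rightarrow> real) \<Rightarrow> (real^'n \<Rightarrow> real) \<Rightarrow> (real^'n \<Rightarrow> real)
   \<Rightarrow> real \<Rightarrow> (real^'n \<Rightarrow> real^'n) \<Rightarrow> (real^'n \<Rightarrow> real) \<Rightarrow> (real^'n \<Rightarrow> real^'n) \<Rightarrow> (real^'n \<Rightarrow> real^'n^'n) \<Rightarrow> bool" where
  "system_Sgamma \<Omega> \<mu> \<alpha> \<alpha>0 \<alpha>1 f \<gamma> w u q p \<longleftrightarrow>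
     equations \<Omega> \<mu> \<alpha> f w u q p \<and>
     (AE x in lebesgue_on \<Omega>.
        max (norm (grad \<Omega> u x - w x)) \<gamma> *\<^sub>R q x - \<alpha>1 x *\<^sub>R (grad \<Omega> u x - w x) = 0 \<and>
        max (norm (symgrad \<Omega> w x)) \<gamma> *\<^sub>R p x - \<alpha>0 x *\<^sub>R symgrad \<Omega> w x = 0)"

end

theory Submission
  imports Defs
begin

text \<open>Testing the variational equations of (S0) and (S\<gamma>) with the two solutions and subtracting
  gives an energy identity: the squared H1 distance of \<open>(u\<^sub>\<gamma>, w\<^sub>\<gamma>)\<close> from \<open>(u, w)\<close>, weighted by
  \<open>\<mu>\<close> and \<open>\<alpha>\<close>, equals minus the integral of the monotonicity terms
  \<open>(q\<^sub>\<gamma> - q)\<cdot>((\<nabla>u\<^sub>\<gamma> - w\<^sub>\<gamma>) - (\<nabla>u - w))\<close> and \<open>(p\<^sub>\<gamma> - p):(Ew\<^sub>\<gamma> - Ew)\<close>.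
  Pointwise, \<open>q\<close> is a subgradient of \<open>\<alpha>\<^sub>1|\<cdot>|\<close> and \<open>q\<^sub>\<gamma>\<close> the gradient of its Huber regularisation
  at scale \<open>\<gamma>\<close>, so each monotonicity term is at least \<open>-\<alpha>\<^sub>i\<gamma>/4\<close>. Hence the squared distance is
  \<open>O(\<gamma>)\<close>. Reading the subtracted equations as identities for the dual variables and applying
  Cauchy--Schwarz then gives the weak* convergence of \<open>div q\<^sub>\<gamma>\<close> and \<open>q\<^sub>\<gamma> + div p\<^sub>\<gamma>\<close>.\<close>


section \<open>Square-integrable functions\<close>

lemma borel_measurable_vec_nth:
  fixes F :: "'a \<Rightarrow> 'b::euclidean_space^'n"
  assumes "F \<in> borel_measurable M"
  shows "(\<lambda>x. F x $ i) \<in> borel_measurable M"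
  using assms unfolding borel_measurable_euclidean_space[where f="\<lambda>x. F x $ i"]
  by (auto simp flip: inner_axis intro!: borel_measurable_inner)

lemma borel_measurable_vec:
  fixes F :: "'a \<Rightarrow> 'b::euclidean_space^'n"
  assumes "\<And>i. (\<lambda>x. F x $ i) \<in> borel_measurable M"
  shows "F \<in> borel_measurable M"
  unfolding borel_measurable_euclidean_space[where f=F]
  by (auto simp: Basis_vec_def inner_axis intro!: borel_measurable_inner assms)

lemma L2_add:
  fixes a b :: "real^'n::finite \<Rightarrow> 'b::euclidean_space"
  assumes a: "L2 \<Omega> a" and b: "L2 \<Omega> b"
  shows "L2 \<Omega> (\<lambda>x. a x + b x)"
proof -
  have meas: "(\<lambda>x. a x + b x) \<in> borel_measurable (lebesgue_on \<Omega>)"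
    using a b unfolding L2_def by (intro borel_measurable_add) auto
  have "integrable (lebesgue_on \<Omega>) (\<lambda>x. (norm (a x + b x))\<^sup>2)"
  proof (rule Bochner_Integration.integrable_bound)
    show "integrable (lebesgue_on \<Omega>) (\<lambda>x. 2 * (norm (a x))\<^sup>2 + 2 * (norm (b x))\<^sup>2)"
      using a b by (simp add: L2_def)
    show "(\<lambda>x. (norm (a x + b x))\<^sup>2) \<in> borel_measurable (lebesgue_on \<Omega>)"
      using meas by measurable
    have "(norm (a x + b x))\<^sup>2 \<le> 2 * (norm (a x))\<^sup>2 + 2 * (norm (b x))\<^sup>2" for x
    proof -
      have "(norm (a x + b x))\<^sup>2 \<le> (norm (a x) + norm (b x))\<^sup>2"
        by (simp add: norm_triangle_ineq power_mono)
      also have "\<dots> \<le> 2 * (norm (a x))\<^sup>2 + 2 * (norm (b x))\<^sup>2"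
        using sum_squares_bound[of "norm (a x)" "norm (b x)"] by (simp add: power2_sum)
      finally show ?thesis .
    qed
    then show "AE x in lebesgue_on \<Omega>.
        norm ((norm (a x + b x))\<^sup>2) \<le> norm (2 * (norm (a x))\<^sup>2 + 2 * (norm (b x))\<^sup>2)"
      by simp
  qed
  with meas show ?thesis
    unfolding L2_def by blast
qed

lemma L2_scaleR:
  fixes a :: "real^'n::finite \<Rightarrow> 'b::euclidean_space"
  assumes "L2 \<Omega> a"
  shows "L2 \<Omega> (\<lambda>x. c *\<^sub>R a x)"
  using assms by (auto simp: L2_def power_mult_distrib)

lemma L2_diff:
  fixes a b :: "real^'n::finite \<Rightarrow> 'b::euclidean_space"
  assumes "L2 \<Omega> a" "L2 \<Omega> b"
  shows "L2 \<Omega> (\<lambda>x. a x - b x)"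
  using L2_add[OF assms(1) L2_scaleR[OF assms(2), of "-1"]] by simp

lemma L2_norm:
  fixes a :: "real^'n::finite \<Rightarrow> 'b::euclidean_space"
  assumes "L2 \<Omega> a"
  shows "L2 \<Omega> (\<lambda>x. norm (a x))"
  using assms by (auto simp: L2_def)

lemma L2_Pair:
  fixes a :: "real^'n::finite \<Rightarrow> 'b::euclidean_space" and b :: "real^'n \<Rightarrow> 'c::euclidean_space"
  assumes "L2 \<Omega> a" "L2 \<Omega> b"
  shows "L2 \<Omega> (\<lambda>x. (a x, b x))"
  using assms unfolding L2_def by (auto simp: norm_Pair intro!: borel_measurable_Pair)

lemma L2_vec_nth:
  fixes F :: "real^'n::finite \<Rightarrow> 'b::euclidean_space^'m"
  assumes F: "L2 \<Omega> F"
  shows "L2 \<Omega> (\<lambda>x. F x $ i)"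
proof -
  have meas: "(\<lambda>x. F x $ i) \<in> borel_measurable (lebesgue_on \<Omega>)"
    using F by (simp add: L2_def borel_measurable_vec_nth)
  have "integrable (lebesgue_on \<Omega>) (\<lambda>x. (norm (F x $ i))\<^sup>2)"
  proof (rule Bochner_Integration.integrable_bound)
    show "integrable (lebesgue_on \<Omega>) (\<lambda>x. (norm (F x))\<^sup>2)"
      using F by (simp add: L2_def)
    show "(\<lambda>x. (norm (F x $ i))\<^sup>2) \<in> borel_measurable (lebesgue_on \<Omega>)"
      using meas by measurable
    show "AE x in lebesgue_on \<Omega>. norm ((norm (F x $ i))\<^sup>2) \<le> norm ((norm (F x))\<^sup>2)"
      by (simp add: power_mono Finite_Cartesian_Product.norm_nth_le)
  qed
  with meas show ?thesis
    unfolding L2_def by blast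
qed

lemma L2_vec:
  fixes F :: "real^'n::finite \<Rightarrow> 'b::euclidean_space^'m::finite"
  assumes "\<And>i. L2 \<Omega> (\<lambda>x. F x $ i)"
  shows "L2 \<Omega> F"
proof -
  have "(norm (F x))\<^sup>2 = (\<Sum>i\<in>UNIV. (norm (F x $ i))\<^sup>2)" for x
    by (simp add: norm_vec_def L2_set_def sum_nonneg)
  moreover have "integrable (lebesgue_on \<Omega>) (\<lambda>x. \<Sum>i\<in>UNIV. (norm (F x $ i))\<^sup>2)"
    using assms unfolding L2_def by (intro Bochner_Integration.integrable_sum) blast
  moreover have "F \<in> borel_measurable (lebesgue_on \<Omega>)"
    using assms unfolding L2_def by (intro borel_measurable_vec) blast
  ultimately show ?thesis
    unfolding L2_def by presburger
qed

lemma integrable_inner_L2: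
  fixes a b :: "real^'n::finite \<Rightarrow> 'b::euclidean_space"
  assumes a: "L2 \<Omega> a" and b: "L2 \<Omega> b"
  shows "integrable (lebesgue_on \<Omega>) (\<lambda>x. a x \<bullet> b x)"
proof (rule Bochner_Integration.integrable_bound)
  show "integrable (lebesgue_on \<Omega>) (\<lambda>x. (norm (a x))\<^sup>2 + (norm (b x))\<^sup>2)"
    using a b by (auto simp: L2_def)
  show "(\<lambda>x. a x \<bullet> b x) \<in> borel_measurable (lebesgue_on \<Omega>)"
    using a b by (auto simp: L2_def)
  have "\<bar>a x \<bullet> b x\<bar> \<le> (norm (a x))\<^sup>2 + (norm (b x))\<^sup>2" for x
  proof -
    have "\<bar>a x \<bullet> b x\<bar> \<le> norm (a x) * norm (b x)"
      by (rule Cauchy_Schwarz_ineq2)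
    moreover have "2 * (norm (a x) * norm (b x)) \<le> (norm (a x))\<^sup>2 + (norm (b x))\<^sup>2"
      using sum_squares_bound[of "norm (a x)" "norm (b x)"] by simp
    ultimately show ?thesis
      using mult_nonneg_nonneg[OF norm_ge_zero norm_ge_zero, of "a x" "b x"] by linarith
  qed
  then show "AE x in lebesgue_on \<Omega>. norm (a x \<bullet> b x) \<le> norm ((norm (a x))\<^sup>2 + (norm (b x))\<^sup>2)"
    by simp
qed

lemma L2_grad: "H1 \<Omega> u \<Longrightarrow> L2 \<Omega> (grad \<Omega> u)"
  unfolding H1_def grad_def by (metis (mono_tags, lifting) someI_ex)

lemma L2_Grad: "H1v \<Omega> w \<Longrightarrow> L2 \<Omega> (Grad \<Omega> w)"
  unfolding Grad_def H1v_def by (rule L2_vec) (auto intro: L2_grad)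

lemma L2_symgrad:
  assumes "H1v \<Omega> w"
  shows "L2 \<Omega> (symgrad \<Omega> w)"
proof -
  have "L2 \<Omega> (\<lambda>x. Grad \<Omega> w x $ j $ i)" for i j
    using L2_vec_nth[OF L2_vec_nth[OF L2_Grad[OF assms]]] .
  then have "L2 \<Omega> (\<lambda>x. transpose (Grad \<Omega> w x))"
    by (auto simp: transpose_def intro!: L2_vec)
  then show ?thesis
    unfolding symgrad_def using L2_Grad[OF assms] by (intro L2_scaleR L2_add)
qed

lemma integrable_mult_L2:
  fixes a b :: "real^'n::finite \<Rightarrow> real"
  assumes "L2 \<Omega> a" "L2 \<Omega> b"
  shows "integrable (lebesgue_on \<Omega>) (\<lambda>x. a x * b x)"
  using integrable_inner_L2[OF assms] by simp

lemma integrable_norm_diff_sq_L2: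
  fixes a b :: "real^'n::finite \<Rightarrow> 'b::euclidean_space"
  assumes "L2 \<Omega> a" "L2 \<Omega> b"
  shows "integrable (lebesgue_on \<Omega>) (\<lambda>x. (norm (a x - b x))\<^sup>2)"
  using L2_diff[OF assms] by (simp add: L2_def)

lemma H1_imp_L2: "H1 \<Omega> u \<Longrightarrow> L2 \<Omega> u"
  by (simp add: H1_def)

lemma H1v_imp_L2: "H1v \<Omega> w \<Longrightarrow> L2 \<Omega> w"
  by (simp add: H1v_def)

lemma integral_Cauchy_Schwarz_nonneg:
  fixes f g :: "'a \<Rightarrow> real"
  assumes [measurable]: "f \<in> borel_measurable M" "g \<in> borel_measurable M"
    and "integrable M (\<lambda>x. (f x)\<^sup>2)" "integrable M (\<lambda>x. (g x)\<^sup>2)" "integrable M (\<lambda>x. f x * g x)"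
    and "\<And>x. f x \<ge> 0" "\<And>x. g x \<ge> 0"
  shows "(LINT x|M. f x * g x)\<^sup>2 \<le> (LINT x|M. (f x)\<^sup>2) * (LINT x|M. (g x)\<^sup>2)"
proof -
  have "ennreal ((LINT x|M. f x * g x)\<^sup>2) = (\<integral>\<^sup>+x. f x * g x \<partial>M)\<^sup>2"
    using assms by (simp add: nn_integral_eq_integral ennreal_power)
  also have "\<dots> \<le> (\<integral>\<^sup>+x. f x ^ 2 \<partial>M) * (\<integral>\<^sup>+x. g x ^ 2 \<partial>M)"
    using Cauchy_Schwarz_nn_integral[of "\<lambda>x. ennreal (f x)" M "\<lambda>x. ennreal (g x)"]
    by (simp add: ennreal_mult ennreal_power assms)
  also have "\<dots> = ennreal ((LINT x|M. (f x)\<^sup>2) * (LINT x|M. (g x)\<^sup>2))"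
    using assms by (simp add: nn_integral_eq_integral ennreal_mult integral_nonneg_AE)
  finally show ?thesis
    by (simp add: ennreal_le_iff integral_nonneg_AE)
qed

lemma L2_Cauchy_Schwarz:
  fixes a b :: "real^'n::finite \<Rightarrow> 'b::euclidean_space"
  assumes a: "L2 \<Omega> a" and b: "L2 \<Omega> b"
  shows "\<bar>LINT x|lebesgue_on \<Omega>. a x \<bullet> b x\<bar> \<le>
    sqrt (LINT x|lebesgue_on \<Omega>. (norm (a x))\<^sup>2) * sqrt (LINT x|lebesgue_on \<Omega>. (norm (b x))\<^sup>2)"
proof -
  let ?M = "lebesgue_on \<Omega>"
  have ab: "integrable ?M (\<lambda>x. norm (a x) * norm (b x))"
    using integrable_inner_L2[OF L2_norm[OF a] L2_norm[OF b]] by simp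
  have "\<bar>LINT x|?M. a x \<bullet> b x\<bar> \<le> (LINT x|?M. norm (a x) * norm (b x))"
    by (rule integral_abs_bound_integral[OF integrable_inner_L2[OF a b] ab Cauchy_Schwarz_ineq2])
  also have "\<dots> \<le> sqrt ((LINT x|?M. (norm (a x))\<^sup>2) * (LINT x|?M. (norm (b x))\<^sup>2))"
  proof (rule real_le_rsqrt, rule integral_Cauchy_Schwarz_nonneg)
    show "(\<lambda>x. norm (a x)) \<in> borel_measurable ?M" "(\<lambda>x. norm (b x)) \<in> borel_measurable ?M"
      using a b unfolding L2_def by (auto intro: borel_measurable_norm)
    show "integrable ?M (\<lambda>x. (norm (a x))\<^sup>2)" "integrable ?M (\<lambda>x. (norm (b x))\<^sup>2)"
      using a b by (simp_all add: L2_def)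
  qed (use ab in auto)
  finally show ?thesis by (simp add: real_sqrt_mult)
qed

section \<open>Subgradients of the norm and their Huber regularisation\<close>

definition norm_subgradient :: "real \<Rightarrow> 'v::real_normed_vector \<Rightarrow> 'v \<Rightarrow> bool" where
  "norm_subgradient a g q \<longleftrightarrow>
     norm q \<le> a \<and> (norm q = a \<longrightarrow> a *\<^sub>R g - norm g *\<^sub>R q = 0) \<and> (norm q < a \<longrightarrow> g = 0)"

text \<open>\<open>huber_gradient a \<gamma> g q\<close> says that \<open>q\<close> is the gradient at \<open>g\<close> of \<open>a\<close> times the Huber
  function, which is \<open>|g| - \<gamma>/2\<close> for \<open>|g| \<ge> \<gamma>\<close> and \<open>|g|\<^sup>2/(2\<gamma>)\<close> otherwise.\<close>

definition huber_gradient :: "real \<Rightarrow> real \<Rightarrow> 'v::real_normed_vector \<Rightarrow> 'v \<Rightarrow> bool" where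
  "huber_gradient a \<gamma> g q \<longleftrightarrow> max (norm g) \<gamma> *\<^sub>R q - a *\<^sub>R g = 0"

lemma norm_subgradient_inner:
  fixes g q :: "'v::real_inner"
  assumes "a > 0" "norm_subgradient a g q"
  shows "q \<bullet> g = a * norm g"
proof (cases "norm q = a")
  case True
  with assms have "a *\<^sub>R g = norm g *\<^sub>R q"
    by (simp add: norm_subgradient_def)
  then have "a * (q \<bullet> g) = norm g * (norm q)\<^sup>2"
    by (metis inner_commute inner_scaleR_left power2_norm_eq_inner)
  then have "a * (q \<bullet> g) = a * (a * norm g)"
    using True by (simp add: power2_eq_square mult.commute)
  with \<open>a > 0\<close> show ?thesis by simp
next
  case False
  with assms show ?thesis by (simp add: norm_subgradient_def)
qed

lemma huber_gradient_eq:
  assumes "\<gamma> > 0" "huber_gradient a \<gamma> g q"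
  shows "q = (a / max (norm g) \<gamma>) *\<^sub>R g"
proof -
  have "max (norm g) \<gamma> *\<^sub>R q = a *\<^sub>R g"
    using assms(2) by (simp add: huber_gradient_def)
  then have "(1 / max (norm g) \<gamma>) *\<^sub>R (max (norm g) \<gamma> *\<^sub>R q) = (1 / max (norm g) \<gamma>) *\<^sub>R (a *\<^sub>R g)"
    by simp
  moreover have "max (norm g) \<gamma> \<noteq> 0"
    using assms(1) by linarith
  ultimately show ?thesis
    by simp
qed

lemma huber_gradient_monotone:
  fixes g q G Q :: "'v::real_inner"
  assumes a: "a > 0" and \<gamma>: "\<gamma> > 0"
    and sub: "norm_subgradient a g q" and hub: "huber_gradient a \<gamma> G Q"
  shows "(Q - q) \<bullet> (G - g) \<ge> - (a * \<gamma> / 4)"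
proof -
  define t m where "t = norm G" and "m = max t \<gamma>"
  have m: "m > 0" "t \<le> m" and t: "t \<ge> 0"
    using \<gamma> by (auto simp: m_def t_def)
  have Q: "Q = (a / m) *\<^sub>R G"
    using huber_gradient_eq[OF \<gamma> hub] by (simp add: m_def t_def)
  have QG: "Q \<bullet> G = a * t\<^sup>2 / m"
    by (simp add: Q t_def power2_norm_eq_inner)
  have "norm Q = a * t / m"
    using a m by (simp add: Q t_def)
  also have "\<dots> \<le> a"
    using a m t by (simp add: divide_le_eq)
  finally have "norm Q \<le> a" .
  have "Q \<bullet> g \<le> norm Q * norm g"
    by (rule norm_cauchy_schwarz)
  also have "\<dots> \<le> a * norm g"
    using \<open>norm Q \<le> a\<close> by (intro mult_right_mono) simp_all
  finally have Qg: "Q \<bullet> g \<le> a * norm g" .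
  have "q \<bullet> G \<le> norm q * t"
    unfolding t_def by (rule norm_cauchy_schwarz)
  also have "\<dots> \<le> a * t"
    using sub t unfolding norm_subgradient_def by (intro mult_right_mono) simp_all
  finally have qG: "q \<bullet> G \<le> a * t" .
  have "a * t\<^sup>2 / m - a * t \<ge> - (a * \<gamma> / 4)"
  proof (cases "t \<ge> \<gamma>")
    case True
    then show ?thesis using a \<gamma> by (simp add: m_def power2_eq_square)
  next
    case False
    then have "a * t\<^sup>2 / m - a * t + a * \<gamma> / 4 = a * (t - \<gamma> / 2)\<^sup>2 / \<gamma>"
      using \<gamma> by (simp add: m_def field_simps power2_eq_square)
    also have "\<dots> \<ge> 0" using a \<gamma> by simp
    finally show ?thesis by simp
  qed
  moreover have "(Q - q) \<bullet> (G - g) = Q \<bullet> G - Q \<bullet> g - q \<bullet> G + q \<bullet> g"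
    by (simp add: inner_diff_left inner_diff_right)
  ultimately show ?thesis
    using QG Qg qG norm_subgradient_inner[OF a sub] by linarith
qed

lemma system_S0_iff:
  "system_S0 \<Omega> \<mu> \<alpha> \<alpha>0 \<alpha>1 f w u q p \<longleftrightarrow> equations \<Omega> \<mu> \<alpha> f w u q p \<and>
     (AE x in lebesgue_on \<Omega>. norm_subgradient (\<alpha>1 x) (grad \<Omega> u x - w x) (q x) \<and>
                             norm_subgradient (\<alpha>0 x) (symgrad \<Omega> w x) (p x))"
  unfolding system_S0_def norm_subgradient_def by (simp add: conj_ac)

lemma system_Sgamma_iff:
  "system_Sgamma \<Omega> \<mu> \<alpha> \<alpha>0 \<alpha>1 f \<gamma> w u q p \<longleftrightarrow> equations \<Omega> \<mu> \<alpha> f w u q p \<and>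
     (AE x in lebesgue_on \<Omega>. huber_gradient (\<alpha>1 x) \<gamma> (grad \<Omega> u x - w x) (q x) \<and>
                             huber_gradient (\<alpha>0 x) \<gamma> (symgrad \<Omega> w x) (p x))"
  unfolding system_Sgamma_def huber_gradient_def by (rule refl)

section \<open>The energy estimate\<close>

lemma equations_L2:
  assumes "equations \<Omega> \<mu> \<alpha> f w u q p"
  shows "L2 \<Omega> u" "L2 \<Omega> (grad \<Omega> u)" "L2 \<Omega> w" "L2 \<Omega> (Grad \<Omega> w)" "L2 \<Omega> (symgrad \<Omega> w)" "L2 \<Omega> q" "L2 \<Omega> p"
  using assms unfolding equations_def by (auto intro: H1_imp_L2 H1v_imp_L2 L2_grad L2_Grad L2_symgrad)

lemma equations_scalar_diff:
  assumes E: "equations \<Omega> \<mu> \<alpha> f w u q p" and E': "equations \<Omega> \<mu> \<alpha> f W U Q P" and v: "H1 \<Omega> v"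
  shows "(LINT x|lebesgue_on \<Omega>. (U x - u x) * v x + \<mu> * ((grad \<Omega> U x - grad \<Omega> u x) \<bullet> grad \<Omega> v x)
            + (Q x - q x) \<bullet> grad \<Omega> v x) = 0"
proof -
  let ?M = "lebesgue_on \<Omega>"
  have v2: "L2 \<Omega> v" "L2 \<Omega> (grad \<Omega> v)"
    using v by (auto intro: H1_imp_L2 L2_grad)
  define lhs where "lhs u q = (LINT x|?M. u x * v x + \<mu> * (grad \<Omega> u x \<bullet> grad \<Omega> v x) + q x \<bullet> grad \<Omega> v x)"
    for u :: "real^'a \<Rightarrow> real" and q :: "real^'a \<Rightarrow> real^'a"
  have lhs_eq: "lhs u q = (LINT x|?M. f x * v x)"
    if "equations \<Omega> \<mu> \<alpha> f w u q p" for w u q p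
  proof -
    note L = equations_L2[OF that]
    have "lhs u q = (LINT x|?M. u x * v x) + \<mu> * (LINT x|?M. grad \<Omega> u x \<bullet> grad \<Omega> v x)
        + (LINT x|?M. q x \<bullet> grad \<Omega> v x)"
      unfolding lhs_def using L v2
      by (simp add: integrable_mult_L2 integrable_inner_L2)
    with that v show ?thesis
      by (simp add: equations_def)
  qed
  have integrable: "integrable ?M (\<lambda>x. u x * v x + \<mu> * (grad \<Omega> u x \<bullet> grad \<Omega> v x) + q x \<bullet> grad \<Omega> v x)"
    if "equations \<Omega> \<mu> \<alpha> f w u q p" for w u q p
    using equations_L2[OF that] v2
    by (intro Bochner_Integration.integrable_add integrable_mult_right integrable_mult_L2 integrable_inner_L2)
  have "(LINT x|?M. (U x - u x) * v x + \<mu> * ((grad \<Omega> U x - grad \<Omega> u x) \<bullet> grad \<Omega> v x)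
            + (Q x - q x) \<bullet> grad \<Omega> v x)
      = (LINT x|?M. (U x * v x + \<mu> * (grad \<Omega> U x \<bullet> grad \<Omega> v x) + Q x \<bullet> grad \<Omega> v x)
            - (u x * v x + \<mu> * (grad \<Omega> u x \<bullet> grad \<Omega> v x) + q x \<bullet> grad \<Omega> v x))"
    by (simp add: algebra_simps inner_diff_left)
  also have "\<dots> = lhs U Q - lhs u q"
    unfolding lhs_def by (rule Bochner_Integration.integral_diff[OF integrable[OF E'] integrable[OF E]])
  also have "\<dots> = 0"
    using lhs_eq[OF E] lhs_eq[OF E'] by simp
  finally show ?thesis .
qed

lemma equations_vector_diff:
  assumes E: "equations \<Omega> \<mu> \<alpha> f w u q p" and E': "equations \<Omega> \<mu> \<alpha> f W U Q P" and \<omega>: "H1v \<Omega> \<omega>"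
  shows "(LINT x|lebesgue_on \<Omega>. \<alpha> * ((W x - w x) \<bullet> \<omega> x + (Grad \<Omega> W x - Grad \<Omega> w x) \<bullet> Grad \<Omega> \<omega> x)
            - (Q x - q x) \<bullet> \<omega> x + (P x - p x) \<bullet> symgrad \<Omega> \<omega> x) = 0"
proof -
  let ?M = "lebesgue_on \<Omega>"
  have \<omega>2: "L2 \<Omega> \<omega>" "L2 \<Omega> (Grad \<Omega> \<omega>)" "L2 \<Omega> (symgrad \<Omega> \<omega>)"
    using \<omega> by (auto intro: H1v_imp_L2 L2_Grad L2_symgrad)
  define lhs where "lhs w q p = (LINT x|?M. \<alpha> * (w x \<bullet> \<omega> x + Grad \<Omega> w x \<bullet> Grad \<Omega> \<omega> x)
      - q x \<bullet> \<omega> x + p x \<bullet> symgrad \<Omega> \<omega> x)"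
    for w q :: "real^'a \<Rightarrow> real^'a" and p :: "real^'a \<Rightarrow> real^'a^'a"
  have integrable: "integrable ?M (\<lambda>x. \<alpha> * (w x \<bullet> \<omega> x + Grad \<Omega> w x \<bullet> Grad \<Omega> \<omega> x)
      - q x \<bullet> \<omega> x + p x \<bullet> symgrad \<Omega> \<omega> x)"
    if "equations \<Omega> \<mu> \<alpha> f w u q p" for w u q p
    using equations_L2[OF that] \<omega>2
    by (intro Bochner_Integration.integrable_add Bochner_Integration.integrable_diff integrable_mult_right
        integrable_inner_L2)
  have lhs_eq: "lhs w q p = 0" if "equations \<Omega> \<mu> \<alpha> f w u q p" for w u q p
  proof -
    note L = equations_L2[OF that]
    have "lhs w q p = \<alpha> * (LINT x|?M. w x \<bullet> \<omega> x + Grad \<Omega> w x \<bullet> Grad \<Omega> \<omega> x)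
        - (LINT x|?M. q x \<bullet> \<omega> x) + (LINT x|?M. p x \<bullet> symgrad \<Omega> \<omega> x)"
      unfolding lhs_def using L \<omega>2
      by (simp add: integrable_inner_L2)
    with that \<omega> show ?thesis
      by (simp add: equations_def)
  qed
  have "(LINT x|?M. \<alpha> * ((W x - w x) \<bullet> \<omega> x + (Grad \<Omega> W x - Grad \<Omega> w x) \<bullet> Grad \<Omega> \<omega> x)
            - (Q x - q x) \<bullet> \<omega> x + (P x - p x) \<bullet> symgrad \<Omega> \<omega> x)
      = (LINT x|?M. (\<alpha> * (W x \<bullet> \<omega> x + Grad \<Omega> W x \<bullet> Grad \<Omega> \<omega> x) - Q x \<bullet> \<omega> x + P x \<bullet> symgrad \<Omega> \<omega> x)
            - (\<alpha> * (w x \<bullet> \<omega> x + Grad \<Omega> w x \<bullet> Grad \<Omega> \<omega> x) - q x \<bullet> \<omega> x + p x \<bullet> symgrad \<Omega> \<omega> x))"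
    by (simp add: algebra_simps inner_diff_left)
  also have "\<dots> = lhs W Q P - lhs w q p"
    unfolding lhs_def by (rule Bochner_Integration.integral_diff[OF integrable[OF E'] integrable[OF E]])
  also have "\<dots> = 0"
    using lhs_eq[OF E] lhs_eq[OF E'] by simp
  finally show ?thesis .
qed

definition energy_dist_sq ::
  "(real^'n::finite) set \<Rightarrow> real \<Rightarrow> real \<Rightarrow> (real^'n \<Rightarrow> real) \<Rightarrow> (real^'n \<Rightarrow> real^'n)
     \<Rightarrow> (real^'n \<Rightarrow> real) \<Rightarrow> (real^'n \<Rightarrow> real^'n) \<Rightarrow> real" where
  "energy_dist_sq \<Omega> \<mu> \<alpha> u w U W = (LINT x|lebesgue_on \<Omega>.
     (U x - u x)\<^sup>2 + \<mu> * (norm (grad \<Omega> U x - grad \<Omega> u x))\<^sup>2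
     + \<alpha> * ((norm (W x - w x))\<^sup>2 + (norm (Grad \<Omega> W x - Grad \<Omega> w x))\<^sup>2))"

lemma energy_identity:
  assumes E: "equations \<Omega> \<mu> \<alpha> f w u q p" and E': "equations \<Omega> \<mu> \<alpha> f W U Q P"
  shows "energy_dist_sq \<Omega> \<mu> \<alpha> u w U W
       + (LINT x|lebesgue_on \<Omega>. (Q x - q x) \<bullet> ((grad \<Omega> U x - W x) - (grad \<Omega> u x - w x))
            + (P x - p x) \<bullet> (symgrad \<Omega> W x - symgrad \<Omega> w x)) = 0"
proof -
  let ?M = "lebesgue_on \<Omega>"
  note L = equations_L2[OF E] equations_L2[OF E']
  have H: "H1 \<Omega> u" "H1 \<Omega> U" "H1v \<Omega> w" "H1v \<Omega> W"
    using E E' by (simp_all add: equations_def)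
  define S where "S v x = (U x - u x) * v x + \<mu> * ((grad \<Omega> U x - grad \<Omega> u x) \<bullet> grad \<Omega> v x)
      + (Q x - q x) \<bullet> grad \<Omega> v x" for v x
  define V where "V \<omega> x = \<alpha> * ((W x - w x) \<bullet> \<omega> x + (Grad \<Omega> W x - Grad \<Omega> w x) \<bullet> Grad \<Omega> \<omega> x)
      - (Q x - q x) \<bullet> \<omega> x + (P x - p x) \<bullet> symgrad \<Omega> \<omega> x" for \<omega> x
  have S: "integrable ?M (S v)" "(LINT x|?M. S v x) = 0" if "H1 \<Omega> v" for v
    using equations_scalar_diff[OF E E' that] H1_imp_L2[OF that] L2_grad[OF that] L unfolding S_def
    by (auto intro!: Bochner_Integration.integrable_add integrable_mult_right integrable_mult_L2
        integrable_inner_L2 L2_diff)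
  have V: "integrable ?M (V \<omega>)" "(LINT x|?M. V \<omega> x) = 0" if "H1v \<Omega> \<omega>" for \<omega>
    using equations_vector_diff[OF E E' that] H1v_imp_L2[OF that] L2_Grad[OF that] L2_symgrad[OF that] L
    unfolding V_def
    by (auto intro!: Bochner_Integration.integrable_add Bochner_Integration.integrable_diff
        integrable_mult_right integrable_inner_L2 L2_diff)
  have "energy_dist_sq \<Omega> \<mu> \<alpha> u w U W
       + (LINT x|?M. (Q x - q x) \<bullet> ((grad \<Omega> U x - W x) - (grad \<Omega> u x - w x))
            + (P x - p x) \<bullet> (symgrad \<Omega> W x - symgrad \<Omega> w x))
      = (LINT x|?M. (U x - u x)\<^sup>2 + \<mu> * (norm (grad \<Omega> U x - grad \<Omega> u x))\<^sup>2
            + \<alpha> * ((norm (W x - w x))\<^sup>2 + (norm (Grad \<Omega> W x - Grad \<Omega> w x))\<^sup>2)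
          + ((Q x - q x) \<bullet> ((grad \<Omega> U x - W x) - (grad \<Omega> u x - w x))
            + (P x - p x) \<bullet> (symgrad \<Omega> W x - symgrad \<Omega> w x)))"
    unfolding energy_dist_sq_def using L integrable_norm_diff_sq_L2[of \<Omega> U u]
    by (intro Bochner_Integration.integral_add[symmetric] Bochner_Integration.integrable_add
        integrable_mult_right integrable_norm_diff_sq_L2 integrable_inner_L2 L2_diff) simp_all
  also have "\<dots> = (LINT x|?M. (S U x - S u x) + (V W x - V w x))"
    unfolding S_def V_def power2_norm_eq_inner
    by (simp add: inner_diff_left inner_diff_right inner_commute algebra_simps power2_eq_square)
  also have "\<dots> = 0"
    using S[OF H(1)] S[OF H(2)] V[OF H(3)] V[OF H(4)] by simp
  finally show ?thesis .
qed

lemma energy_estimate: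
  assumes E: "equations \<Omega> \<mu> \<alpha> f w u q p" and E': "equations \<Omega> \<mu> \<alpha> f W U Q P"
    and \<gamma>: "\<gamma> > 0" and \<Omega>: "\<Omega> \<in> lmeasurable"
    and bounds: "\<And>x. x \<in> \<Omega> \<Longrightarrow> 0 < \<alpha>0 x \<and> \<alpha>0 x \<le> M \<and> 0 < \<alpha>1 x \<and> \<alpha>1 x \<le> M"
    and sub: "AE x in lebesgue_on \<Omega>. norm_subgradient (\<alpha>1 x) (grad \<Omega> u x - w x) (q x) \<and>
                                      norm_subgradient (\<alpha>0 x) (symgrad \<Omega> w x) (p x)"
    and hub: "AE x in lebesgue_on \<Omega>. huber_gradient (\<alpha>1 x) \<gamma> (grad \<Omega> U x - W x) (Q x) \<and>
                                      huber_gradient (\<alpha>0 x) \<gamma> (symgrad \<Omega> W x) (P x)"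
  shows "energy_dist_sq \<Omega> \<mu> \<alpha> u w U W \<le> \<gamma> * (M / 2 * measure lebesgue \<Omega>)"
proof -
  let ?M = "lebesgue_on \<Omega>"
  define R where "R x = (Q x - q x) \<bullet> ((grad \<Omega> U x - W x) - (grad \<Omega> u x - w x))
      + (P x - p x) \<bullet> (symgrad \<Omega> W x - symgrad \<Omega> w x)" for x
  have "AE x in ?M. - (\<gamma> * M / 2) \<le> R x"
    using sub hub AE_space[of ?M]
  proof eventually_elim
    case (elim x)
    then have x: "0 < \<alpha>0 x" "\<alpha>0 x \<le> M" "0 < \<alpha>1 x" "\<alpha>1 x \<le> M"
      using bounds by auto
    have "- (\<alpha>1 x * \<gamma> / 4) + - (\<alpha>0 x * \<gamma> / 4) \<le> R x"
      unfolding R_def using elim x(1,3) \<gamma>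
      by (intro add_mono huber_gradient_monotone) auto
    moreover have "\<alpha>1 x * \<gamma> + \<alpha>0 x * \<gamma> \<le> M * \<gamma> + M * \<gamma>"
      using x \<gamma> by (intro add_mono mult_right_mono) auto
    ultimately show ?case
      by (simp add: algebra_simps)
  qed
  moreover have "integrable ?M R"
    unfolding R_def using equations_L2[OF E] equations_L2[OF E']
    by (intro Bochner_Integration.integrable_add integrable_inner_L2 L2_diff)
  moreover have "integrable ?M (\<lambda>x. - (\<gamma> * M / 2))"
    using finite_measure_lebesgue_on[OF \<Omega>] by (simp add: finite_measure.integrable_const)
  ultimately have "(LINT x|?M. - (\<gamma> * M / 2)) \<le> (LINT x|?M. R x)"
    by (intro integral_mono_AE)
  moreover have "measure ?M \<Omega> = measure lebesgue \<Omega>"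
    using \<Omega> by (simp add: measure_restrict_space fmeasurable_def)
  ultimately show ?thesis
    using energy_identity[OF E E'] unfolding R_def by (simp add: algebra_simps)
qed

definition H1_dist_sq :: "(real^'n::finite) set \<Rightarrow> (real^'n \<Rightarrow> real) \<Rightarrow> (real^'n \<Rightarrow> real) \<Rightarrow> real" where
  "H1_dist_sq \<Omega> u U = (LINT x|lebesgue_on \<Omega>. (U x - u x)\<^sup>2 + (norm (grad \<Omega> U x - grad \<Omega> u x))\<^sup>2)"

definition H1v_dist_sq :: "(real^'n::finite) set \<Rightarrow> (real^'n \<Rightarrow> real^'n) \<Rightarrow> (real^'n \<Rightarrow> real^'n) \<Rightarrow> real" where
  "H1v_dist_sq \<Omega> w W = (LINT x|lebesgue_on \<Omega>. (norm (W x - w x))\<^sup>2 + (norm (Grad \<Omega> W x - Grad \<Omega> w x))\<^sup>2)"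

lemma H1_dist_sq_nonneg: "H1_dist_sq \<Omega> u U \<ge> 0"
  unfolding H1_dist_sq_def by (intro integral_nonneg_AE) auto

lemma H1v_dist_sq_nonneg: "H1v_dist_sq \<Omega> w W \<ge> 0"
  unfolding H1v_dist_sq_def by (intro integral_nonneg_AE) auto

lemma H1_dist_sq_le_energy_dist_sq:
  assumes E: "equations \<Omega> \<mu> \<alpha> f w u q p" and E': "equations \<Omega> \<mu> \<alpha> f W U Q P"
    and "\<mu> > 0" "\<alpha> > 0"
  shows "min 1 \<mu> * H1_dist_sq \<Omega> u U \<le> energy_dist_sq \<Omega> \<mu> \<alpha> u w U W"
    and "min 1 \<alpha> * H1v_dist_sq \<Omega> w W \<le> energy_dist_sq \<Omega> \<mu> \<alpha> u w U W"
proof -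
  let ?M = "lebesgue_on \<Omega>"
  note L = equations_L2[OF E] equations_L2[OF E']
  have sq: "integrable ?M (\<lambda>x. (U x - u x)\<^sup>2)"
    using integrable_norm_diff_sq_L2[of \<Omega> U u] L by simp
  have energy: "integrable ?M (\<lambda>x. (U x - u x)\<^sup>2 + \<mu> * (norm (grad \<Omega> U x - grad \<Omega> u x))\<^sup>2
      + \<alpha> * ((norm (W x - w x))\<^sup>2 + (norm (Grad \<Omega> W x - Grad \<Omega> w x))\<^sup>2))"
    using sq L by (intro Bochner_Integration.integrable_add integrable_mult_right integrable_norm_diff_sq_L2)
  have "min 1 \<mu> * ((U x - u x)\<^sup>2 + (norm (grad \<Omega> U x - grad \<Omega> u x))\<^sup>2)
      \<le> (U x - u x)\<^sup>2 + \<mu> * (norm (grad \<Omega> U x - grad \<Omega> u x))\<^sup>2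
        + \<alpha> * ((norm (W x - w x))\<^sup>2 + (norm (Grad \<Omega> W x - Grad \<Omega> w x))\<^sup>2)" for x
  proof -
    have "min 1 \<mu> * (U x - u x)\<^sup>2 \<le> (U x - u x)\<^sup>2"
      using \<open>\<mu> > 0\<close> by (intro mult_left_le_one_le) auto
    moreover have "min 1 \<mu> * (norm (grad \<Omega> U x - grad \<Omega> u x))\<^sup>2 \<le> \<mu> * (norm (grad \<Omega> U x - grad \<Omega> u x))\<^sup>2"
      by (intro mult_right_mono) auto
    moreover have "0 \<le> \<alpha> * ((norm (W x - w x))\<^sup>2 + (norm (Grad \<Omega> W x - Grad \<Omega> w x))\<^sup>2)"
      using \<open>\<alpha> > 0\<close> by simp
    ultimately show ?thesis
      unfolding distrib_left by linarith
  qed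
  then have "(LINT x|?M. min 1 \<mu> * ((U x - u x)\<^sup>2 + (norm (grad \<Omega> U x - grad \<Omega> u x))\<^sup>2))
      \<le> energy_dist_sq \<Omega> \<mu> \<alpha> u w U W"
    unfolding energy_dist_sq_def using sq L energy
    by (intro integral_mono integrable_mult_right Bochner_Integration.integrable_add
        integrable_norm_diff_sq_L2)
  then show "min 1 \<mu> * H1_dist_sq \<Omega> u U \<le> energy_dist_sq \<Omega> \<mu> \<alpha> u w U W"
    by (simp add: H1_dist_sq_def)
  have "(LINT x|?M. min 1 \<alpha> * ((norm (W x - w x))\<^sup>2 + (norm (Grad \<Omega> W x - Grad \<Omega> w x))\<^sup>2))
      \<le> energy_dist_sq \<Omega> \<mu> \<alpha> u w U W"
    unfolding energy_dist_sq_def using sq L energy \<open>\<mu> > 0\<close>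
    by (intro integral_mono integrable_mult_right Bochner_Integration.integrable_add
        integrable_norm_diff_sq_L2)
      (auto intro!: mult_right_mono add_increasing)
  then show "min 1 \<alpha> * H1v_dist_sq \<Omega> w W \<le> energy_dist_sq \<Omega> \<mu> \<alpha> u w U W"
    by (simp add: H1v_dist_sq_def)
qed

lemma H1_dist_sq_estimate:
  assumes E: "equations \<Omega> \<mu> \<alpha> f w u q p" and E': "equations \<Omega> \<mu> \<alpha> f W U Q P"
    and "\<mu> > 0" "\<alpha> > 0" "\<gamma> > 0" "\<Omega> \<in> lmeasurable"
    and "\<And>x. x \<in> \<Omega> \<Longrightarrow> 0 < \<alpha>0 x \<and> \<alpha>0 x \<le> M \<and> 0 < \<alpha>1 x \<and> \<alpha>1 x \<le> M"
    and "AE x in lebesgue_on \<Omega>. norm_subgradient (\<alpha>1 x) (grad \<Omega> u x - w x) (q x) \<and>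
                                norm_subgradient (\<alpha>0 x) (symgrad \<Omega> w x) (p x)"
    and "AE x in lebesgue_on \<Omega>. huber_gradient (\<alpha>1 x) \<gamma> (grad \<Omega> U x - W x) (Q x) \<and>
                                huber_gradient (\<alpha>0 x) \<gamma> (symgrad \<Omega> W x) (P x)"
  shows "H1_dist_sq \<Omega> u U \<le> \<gamma> * (M / 2 * measure lebesgue \<Omega> / min 1 \<mu>)"
    and "H1v_dist_sq \<Omega> w W \<le> \<gamma> * (M / 2 * measure lebesgue \<Omega> / min 1 \<alpha>)"
  using energy_estimate[OF E E' assms(5-9)] H1_dist_sq_le_energy_dist_sq[OF E E' assms(3,4)] assms(3,4)
  by (auto simp: field_simps)

section \<open>Convergence\<close>

lemma tendsto_at_right_0_of_linear_bound:
  fixes D :: "real \<Rightarrow> real"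
  assumes "\<And>\<gamma>. \<gamma> > 0 \<Longrightarrow> 0 \<le> D \<gamma> \<and> D \<gamma> \<le> \<gamma> * C"
  shows "(D \<longlongrightarrow> 0) (at_right 0)"
proof (rule tendsto_sandwich)
  show "\<forall>\<^sub>F \<gamma> in at_right 0. 0 \<le> D \<gamma>" "\<forall>\<^sub>F \<gamma> in at_right 0. D \<gamma> \<le> \<gamma> * C"
    using assms by (auto intro: eventually_mono[OF eventually_at_right_less])
  have "((\<lambda>\<gamma>. \<gamma> * C) \<longlongrightarrow> 0 * C) (at_right 0)"
    by (intro tendsto_intros)
  then show "((\<lambda>\<gamma>. \<gamma> * C) \<longlongrightarrow> 0) (at_right 0)"
    by simp
qed simp

lemma tendsto_of_dist_le_sqrt:
  fixes X :: "'a \<Rightarrow> real"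
  assumes "\<forall>\<^sub>F \<gamma> in F. \<bar>X \<gamma> - x\<bar> \<le> sqrt (D \<gamma>) * C" and "(D \<longlongrightarrow> 0) F"
  shows "(X \<longlongrightarrow> x) F"
proof (rule LIM_zero_cancel, rule Lim_null_comparison)
  show "\<forall>\<^sub>F \<gamma> in F. norm (X \<gamma> - x) \<le> sqrt (D \<gamma>) * C"
    using assms(1) by simp
  have "((\<lambda>\<gamma>. sqrt (D \<gamma>) * C) \<longlongrightarrow> sqrt 0 * C) F"
    by (intro tendsto_intros assms(2))
  then show "((\<lambda>\<gamma>. sqrt (D \<gamma>) * C) \<longlongrightarrow> 0) F"
    by simp
qed

lemma continuous_on_closure_bounded_above:
  fixes g :: "'a::euclidean_space \<Rightarrow> real"
  assumes "bounded S" "continuous_on (closure S) g"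
  obtains M where "\<And>x. x \<in> S \<Longrightarrow> g x \<le> M"
proof -
  have "bounded (g ` closure S)"
    using assms by (intro compact_imp_bounded compact_continuous_image) auto
  then obtain M where M: "\<forall>y \<in> g ` closure S. \<bar>y\<bar> \<le> M"
    unfolding bounded_real by blast
  show thesis
  proof (rule that)
    fix x
    assume "x \<in> S"
    then have "\<bar>g x\<bar> \<le> M"
      using M closure_subset by blast
    then show "g x \<le> M"
      by simp
  qed
qed

lemma dual_scalar_diff_bound:
  assumes E: "equations \<Omega> \<mu> \<alpha> f w u q p" and E': "equations \<Omega> \<mu> \<alpha> f W U Q P" and v: "H1 \<Omega> v"
  shows "\<bar>(LINT x|lebesgue_on \<Omega>. Q x \<bullet> grad \<Omega> v x) - (LINT x|lebesgue_on \<Omega>. q x \<bullet> grad \<Omega> v x)\<bar>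
    \<le> sqrt (H1_dist_sq \<Omega> u U) * sqrt (LINT x|lebesgue_on \<Omega>. (norm (v x, \<mu> *\<^sub>R grad \<Omega> v x))\<^sup>2)"
proof -
  let ?M = "lebesgue_on \<Omega>"
  note L = equations_L2[OF E] equations_L2[OF E'] H1_imp_L2[OF v] L2_grad[OF v]
  have "(LINT x|?M. Q x \<bullet> grad \<Omega> v x) - (LINT x|?M. q x \<bullet> grad \<Omega> v x)
      = (LINT x|?M. (Q x - q x) \<bullet> grad \<Omega> v x)"
    using L by (simp add: inner_diff_left integrable_inner_L2)
  also have "\<dots> = - (LINT x|?M. (U x - u x, grad \<Omega> U x - grad \<Omega> u x) \<bullet> (v x, \<mu> *\<^sub>R grad \<Omega> v x))"
    using equations_scalar_diff[OF E E' v] L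
    by (simp add: integrable_mult_L2 integrable_inner_L2 L2_diff)
  finally have "\<bar>(LINT x|?M. Q x \<bullet> grad \<Omega> v x) - (LINT x|?M. q x \<bullet> grad \<Omega> v x)\<bar>
      = \<bar>LINT x|?M. (U x - u x, grad \<Omega> U x - grad \<Omega> u x) \<bullet> (v x, \<mu> *\<^sub>R grad \<Omega> v x)\<bar>"
    by simp
  also have "\<dots> \<le> sqrt (LINT x|?M. (norm (U x - u x, grad \<Omega> U x - grad \<Omega> u x))\<^sup>2)
      * sqrt (LINT x|?M. (norm (v x, \<mu> *\<^sub>R grad \<Omega> v x))\<^sup>2)"
    using L by (intro L2_Cauchy_Schwarz L2_Pair L2_diff L2_scaleR)
  finally show ?thesis
    by (simp add: H1_dist_sq_def norm_Pair)
qed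

lemma dual_vector_diff_bound:
  assumes E: "equations \<Omega> \<mu> \<alpha> f w u q p" and E': "equations \<Omega> \<mu> \<alpha> f W U Q P" and \<omega>: "H1v \<Omega> \<omega>"
  shows "\<bar>((LINT x|lebesgue_on \<Omega>. Q x \<bullet> \<omega> x) - (LINT x|lebesgue_on \<Omega>. P x \<bullet> symgrad \<Omega> \<omega> x))
          - ((LINT x|lebesgue_on \<Omega>. q x \<bullet> \<omega> x) - (LINT x|lebesgue_on \<Omega>. p x \<bullet> symgrad \<Omega> \<omega> x))\<bar>
    \<le> sqrt (H1v_dist_sq \<Omega> w W) * sqrt (LINT x|lebesgue_on \<Omega>. (norm (\<alpha> *\<^sub>R \<omega> x, \<alpha> *\<^sub>R Grad \<Omega> \<omega> x))\<^sup>2)"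
proof -
  let ?M = "lebesgue_on \<Omega>"
  note L = equations_L2[OF E] equations_L2[OF E'] H1v_imp_L2[OF \<omega>] L2_Grad[OF \<omega>] L2_symgrad[OF \<omega>]
  have "((LINT x|?M. Q x \<bullet> \<omega> x) - (LINT x|?M. P x \<bullet> symgrad \<Omega> \<omega> x))
          - ((LINT x|?M. q x \<bullet> \<omega> x) - (LINT x|?M. p x \<bullet> symgrad \<Omega> \<omega> x))
      = (LINT x|?M. (Q x - q x) \<bullet> \<omega> x - (P x - p x) \<bullet> symgrad \<Omega> \<omega> x)"
    using L by (simp add: inner_diff_left integrable_inner_L2 L2_diff)
  also have "\<dots> = (LINT x|?M. (W x - w x, Grad \<Omega> W x - Grad \<Omega> w x) \<bullet> (\<alpha> *\<^sub>R \<omega> x, \<alpha> *\<^sub>R Grad \<Omega> \<omega> x))"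
    using equations_vector_diff[OF E E' \<omega>] L
    by (simp add: integrable_inner_L2 L2_diff algebra_simps)
  finally have "\<bar>((LINT x|?M. Q x \<bullet> \<omega> x) - (LINT x|?M. P x \<bullet> symgrad \<Omega> \<omega> x))
          - ((LINT x|?M. q x \<bullet> \<omega> x) - (LINT x|?M. p x \<bullet> symgrad \<Omega> \<omega> x))\<bar>
      = \<bar>LINT x|?M. (W x - w x, Grad \<Omega> W x - Grad \<Omega> w x) \<bullet> (\<alpha> *\<^sub>R \<omega> x, \<alpha> *\<^sub>R Grad \<Omega> \<omega> x)\<bar>"
    by simp
  also have "\<dots> \<le> sqrt (LINT x|?M. (norm (W x - w x, Grad \<Omega> W x - Grad \<Omega> w x))\<^sup>2)
      * sqrt (LINT x|?M. (norm (\<alpha> *\<^sub>R \<omega> x, \<alpha> *\<^sub>R Grad \<Omega> \<omega> x))\<^sup>2)"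
    using L by (intro L2_Cauchy_Schwarz L2_Pair L2_diff L2_scaleR)
  finally show ?thesis
    by (simp add: H1v_dist_sq_def norm_Pair)
qed

theorem proposition4p4:
  fixes \<Omega> :: "(real^'n::finite) set"
    and \<mu> \<alpha> :: real
    and \<alpha>0 \<alpha>1 f u :: "real^'n \<Rightarrow> real"
    and w q :: "real^'n \<Rightarrow> real^'n"
    and p :: "real^'n \<Rightarrow> real^'n^'n"
    and ug :: "real \<Rightarrow> real^'n \<Rightarrow> real"
    and wg qg :: "real \<Rightarrow> real^'n \<Rightarrow> real^'n"
    and pg :: "real \<Rightarrow> real^'n \<Rightarrow> real^'n^'n"
  assumes dim: "CARD('n) \<ge> 2"
    and dom: "bounded \<Omega>" "open \<Omega>" "lipschitz_boundary \<Omega>"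
    and cont: "continuous_on (closure \<Omega>) \<alpha>0" "continuous_on (closure \<Omega>) \<alpha>1"
    and lower: "\<exists>a>0. \<forall>x\<in>closure \<Omega>. \<alpha>0 x > a \<and> \<alpha>1 x > a"
    and f: "L2 \<Omega> f"
    and par: "\<mu> > 0" "\<alpha> > 0"
    and S0: "system_S0 \<Omega> \<mu> \<alpha> \<alpha>0 \<alpha>1 f w u q p"
    and Sg: "\<And>\<gamma>. \<gamma> > 0 \<Longrightarrow> system_Sgamma \<Omega> \<mu> \<alpha> \<alpha>0 \<alpha>1 f \<gamma> (wg \<gamma>) (ug \<gamma>) (qg \<gamma>) (pg \<gamma>)"
  shows "((\<lambda>\<gamma>. LINT x|lebesgue_on \<Omega>. (ug \<gamma> x - u x)\<^sup>2
                 + (norm (grad \<Omega> (ug \<gamma>) x - grad \<Omega> u x))\<^sup>2) \<longlongrightarrow> 0) (at_right 0) \<and>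
         ((\<lambda>\<gamma>. LINT x|lebesgue_on \<Omega>. (norm (wg \<gamma> x - w x))\<^sup>2
                 + (norm (Grad \<Omega> (wg \<gamma>) x - Grad \<Omega> w x))\<^sup>2) \<longlongrightarrow> 0) (at_right 0) \<and>
         (\<forall>v. H1 \<Omega> v \<longrightarrow>
           ((\<lambda>\<gamma>. - (LINT x|lebesgue_on \<Omega>. qg \<gamma> x \<bullet> grad \<Omega> v x))
              \<longlongrightarrow> - (LINT x|lebesgue_on \<Omega>. q x \<bullet> grad \<Omega> v x)) (at_right 0)) \<and>
         (\<forall>\<omega>. H1v \<Omega> \<omega> \<longrightarrow>
           ((\<lambda>\<gamma>. (LINT x|lebesgue_on \<Omega>. qg \<gamma> x \<bullet> \<omega> x) - (LINT x|lebesgue_on \<Omega>. pg \<gamma> x \<bullet> symgrad \<Omega> \<omega> x))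
              \<longlongrightarrow> (LINT x|lebesgue_on \<Omega>. q x \<bullet> \<omega> x) - (LINT x|lebesgue_on \<Omega>. p x \<bullet> symgrad \<Omega> \<omega> x)) (at_right 0))"
proof -
  obtain M0 where M0: "\<And>x. x \<in> \<Omega> \<Longrightarrow> \<alpha>0 x \<le> M0"
    using continuous_on_closure_bounded_above[OF dom(1) cont(1)] by blast
  obtain M1 where M1: "\<And>x. x \<in> \<Omega> \<Longrightarrow> \<alpha>1 x \<le> M1"
    using continuous_on_closure_bounded_above[OF dom(1) cont(2)] by blast
  have bounds: "0 < \<alpha>0 x \<and> \<alpha>0 x \<le> max M0 M1 \<and> 0 < \<alpha>1 x \<and> \<alpha>1 x \<le> max M0 M1" if "x \<in> \<Omega>" for x
    using lower closure_subset M0[OF that] M1[OF that] that by force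
  have \<Omega>: "\<Omega> \<in> lmeasurable"
    using dom by (intro lmeasurable_open)
  have E0: "equations \<Omega> \<mu> \<alpha> f w u q p"
    and sub: "AE x in lebesgue_on \<Omega>. norm_subgradient (\<alpha>1 x) (grad \<Omega> u x - w x) (q x) \<and>
                                      norm_subgradient (\<alpha>0 x) (symgrad \<Omega> w x) (p x)"
    using S0 by (simp_all add: system_S0_iff)
  have Eg: "equations \<Omega> \<mu> \<alpha> f (wg \<gamma>) (ug \<gamma>) (qg \<gamma>) (pg \<gamma>)"
    and hub: "AE x in lebesgue_on \<Omega>. huber_gradient (\<alpha>1 x) \<gamma> (grad \<Omega> (ug \<gamma>) x - wg \<gamma> x) (qg \<gamma> x) \<and>
                                      huber_gradient (\<alpha>0 x) \<gamma> (symgrad \<Omega> (wg \<gamma>) x) (pg \<gamma> x)"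
    if "\<gamma> > 0" for \<gamma>
    using Sg[OF that] by (simp_all add: system_Sgamma_iff)
  note estimate = H1_dist_sq_estimate[OF E0 Eg par _ \<Omega> bounds sub hub]
  have u_lim: "((\<lambda>\<gamma>. H1_dist_sq \<Omega> u (ug \<gamma>)) \<longlongrightarrow> 0) (at_right 0)"
    using estimate(1) H1_dist_sq_nonneg by (intro tendsto_at_right_0_of_linear_bound) blast
  have w_lim: "((\<lambda>\<gamma>. H1v_dist_sq \<Omega> w (wg \<gamma>)) \<longlongrightarrow> 0) (at_right 0)"
    using estimate(2) H1v_dist_sq_nonneg by (intro tendsto_at_right_0_of_linear_bound) blast
  have "((\<lambda>\<gamma>. LINT x|lebesgue_on \<Omega>. qg \<gamma> x \<bullet> grad \<Omega> v x)
      \<longlongrightarrow> (LINT x|lebesgue_on \<Omega>. q x \<bullet> grad \<Omega> v x)) (at_right 0)"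
    if "H1 \<Omega> v" for v
    using eventually_at_right_less[of 0]
    by (intro tendsto_of_dist_le_sqrt[OF _ u_lim])
      (auto elim!: eventually_mono intro: dual_scalar_diff_bound[OF E0 Eg that])
  moreover have "((\<lambda>\<gamma>. (LINT x|lebesgue_on \<Omega>. qg \<gamma> x \<bullet> \<omega> x) - (LINT x|lebesgue_on \<Omega>. pg \<gamma> x \<bullet> symgrad \<Omega> \<omega> x))
      \<longlongrightarrow> (LINT x|lebesgue_on \<Omega>. q x \<bullet> \<omega> x) - (LINT x|lebesgue_on \<Omega>. p x \<bullet> symgrad \<Omega> \<omega> x)) (at_right 0)"
    if "H1v \<Omega> \<omega>" for \<omega>
    using eventually_at_right_less[of 0]
    by (intro tendsto_of_dist_le_sqrt[OF _ w_lim])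
      (auto elim!: eventually_mono intro: dual_vector_diff_bound[OF E0 Eg that])
  ultimately show ?thesis
    using u_lim w_lim unfolding H1_dist_sq_def H1v_dist_sq_def by (auto intro: tendsto_minus)
qed

end
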